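(* The energy spectral density $S_\Omega(z)=\sum_{l=-\infty}^{\infty}r(l)z^{-l}$ of the channel uncertainty satisfies $$S_\Omega(z)=\frac12\sum_{i_1,i_2=0}^{\bar\tau}\big(\alpha_{i_1}z^{i_1}-\alpha_{i_2}z^{i_2}\big)\big(\alpha_{i_1}z^{-i_1}-\alpha_{i_2}z^{-i_2}\big)p_{i_1}p_{i_2}.$$
   Context: Fix an integer $\bar\tau\ge1$, let $\mathcal{D}=\{0,\dots,\bar\tau\}$, and fix real weights $\alpha_0,\dots,\alpha_{\bar\tau}$. Let $\{\tau_n\}$ be i.i.d. $\mathcal{D}$-valued random variables with $\Pr\{\tau_n=i\}=p_i$, where $\sum_ip_i=1$. Let $\delta$ be the Kronecker delta. Define $\omega(k,n)=\alpha_i[\delta(\tau_n-i)-p_i]$ if $k=n+i$ with $i\in\mathcal{D}$, and $\omega(k,n)=0$ otherwise. For a fixed index $n$, define the autocorrelation $$r(l)=\mathbb{E}\Big\{\sum_{k=-\infty}^{\infty}\omega(k,n)\omega(k+l,n)\Big\},\qquad l\in\mathbb{Z}.$$ It does not depend on $n$. *)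

theory Defs
  imports "HOL-Probability.Probability"
begin

definition kdelta :: "int \<Rightarrow> real" where
  "kdelta x = (if x = 0 then 1 else 0)"

text \<open>omega(k,n) given the realised value t of tau_n:
  alpha_i [delta(t - i) - p_i] if k = n + i with i in {0..taubar}, else 0.\<close>
definition omega :: "(nat \<Rightarrow> real) \<Rightarrow> (nat \<Rightarrow> real) \<Rightarrow> nat \<Rightarrow> nat \<Rightarrow> int \<Rightarrow> int \<Rightarrow> real" where
  "omega \<alpha> p taubar t k n =
     (if n \<le> k \<and> k - n \<le> int taubar
      then \<alpha> (nat (k - n)) * (kdelta (int t - (k - n)) - p (nat (k - n)))
      else 0)"

definition autocorr :: "(nat \<Rightarrow> real) \<Rightarrow> nat pmf \<Rightarrow> nat \<Rightarrow> int \<Rightarrow> int \<Rightarrow> real" where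
  "autocorr \<alpha> P taubar n l =
     measure_pmf.expectation P
       (\<lambda>t. \<Sum>\<^sub>\<infinity>k\<in>(UNIV::int set).
              omega \<alpha> (pmf P) taubar t k n * omega \<alpha> (pmf P) taubar t (k + l) n)"

definition esd :: "(nat \<Rightarrow> real) \<Rightarrow> nat pmf \<Rightarrow> nat \<Rightarrow> int \<Rightarrow> complex \<Rightarrow> complex" where
  "esd \<alpha> P taubar n z =
     (\<Sum>\<^sub>\<infinity>l\<in>(UNIV::int set). complex_of_real (autocorr \<alpha> P taubar n l) * z powi (- l))"

end

theory Submission
  imports Defs
begin

(* Given tau_n = t, the sequence k \<mapsto> omega(k,n) is the finite sequence
   w_t(i) = alpha_i (delta(t - i) - p_i) placed at k = n + i.  The z-transform of the
   autocorrelation of a finite sequence w is W(z) W(1/z) with W(z) = sum_i w(i) z^i, and here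
   W_t(z) = alpha_t z^t - E[alpha_tau z^tau].  Averaging over t, S(z) is therefore the
   covariance of A = alpha_tau z^tau and B = alpha_tau z^(-tau), and a covariance equals
   1/2 E[(A - A')(B - B')] for an independent copy (A', B'). *)

lemma infsum_eq_sum_if_vanishes_outside:
  fixes f :: "'a \<Rightarrow> 'b::{topological_comm_monoid_add, t2_space}"
  assumes "finite B" "B \<subseteq> A" "\<And>x. x \<in> A - B \<Longrightarrow> f x = 0"
  shows "infsum f A = sum f B"
  by (intro infsumI has_sum_finite_neutralI) (use assms in auto)

lemma has_sum_sum:
  fixes f :: "'i \<Rightarrow> 'a \<Rightarrow> 'b::topological_comm_monoid_add"
  assumes "finite I" "\<And>i. i \<in> I \<Longrightarrow> (f i has_sum s i) A"
  shows "((\<lambda>x. \<Sum>i\<in>I. f i x) has_sum (\<Sum>i\<in>I. s i)) A"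
  using assms by (induction I rule: finite_induct) (auto intro: has_sum_add)

lemma has_sum_z_transform_autocorrelation:
  fixes x :: "int \<Rightarrow> real" and z :: complex
  assumes "finite S" and "\<And>k. k \<notin> S \<Longrightarrow> x k = 0"
  shows "((\<lambda>l. of_real (\<Sum>\<^sub>\<infinity>k. x k * x (k + l)) * z powi (- l)) has_sum
           (\<Sum>k\<in>S. \<Sum>j\<in>S. of_real (x k * x j) * z powi (k - j))) UNIV"
proof -
  have shifted: "((\<lambda>l. of_real (x k * x (k + l)) * z powi (- l)) has_sum
                  (\<Sum>j\<in>S. of_real (x k * x j) * z powi (k - j))) UNIV" for k
  proof -
    let ?g = "\<lambda>j. of_real (x k * x j) * z powi (k - j)"
    have "(?g has_sum (\<Sum>j\<in>S. ?g j)) UNIV"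
      by (rule has_sum_finite_neutralI) (use assms in auto)
    moreover have "bij_betw (\<lambda>l. k + l) UNIV UNIV"
      by (rule bij_betwI[where g = "\<lambda>j. j - k"]) auto
    ultimately show ?thesis
      using has_sum_reindex_bij_betw[of "\<lambda>l. k + l" UNIV UNIV ?g] by simp
  qed
  have "of_real (\<Sum>\<^sub>\<infinity>k. x k * x (k + l)) * z powi (- l)
        = (\<Sum>k\<in>S. of_real (x k * x (k + l)) * z powi (- l))" for l
    by (subst infsum_eq_sum_if_vanishes_outside[of S]) (use assms in \<open>auto simp: sum_distrib_right\<close>)
  then show ?thesis
    using has_sum_sum[OF assms(1) shifted] by simp
qed

lemma sum_centered_products_eq_half_pairwise:
  fixes a b q :: "'i \<Rightarrow> 'a::field_char_0"
  assumes "sum q D = 1"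
  shows "(\<Sum>t\<in>D. q t * ((a t - (\<Sum>i\<in>D. q i * a i)) * (b t - (\<Sum>i\<in>D. q i * b i))))
    = 1/2 * (\<Sum>i\<in>D. \<Sum>j\<in>D. (a i - a j) * (b i - b j) * q i * q j)"
proof -
  let ?A = "\<Sum>i\<in>D. q i * a i" and ?B = "\<Sum>i\<in>D. q i * b i"
    and ?AB = "\<Sum>i\<in>D. q i * a i * b i"
  have "(\<Sum>t\<in>D. q t * ((a t - ?A) * (b t - ?B)))
      = (\<Sum>t\<in>D. q t * a t * b t - q t * a t * ?B - ?A * (q t * b t) + ?A * ?B * q t)"
    by (rule sum.cong) (simp_all add: algebra_simps)
  also have "\<dots> = ?AB - ?A * ?B"
    using assms by (simp add: sum.distrib sum_subtractf flip: sum_distrib_left sum_distrib_right)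
  finally have centered: "(\<Sum>t\<in>D. q t * ((a t - ?A) * (b t - ?B))) = ?AB - ?A * ?B" .
  have "(\<Sum>i\<in>D. \<Sum>j\<in>D. (a i - a j) * (b i - b j) * q i * q j)
      = (\<Sum>i\<in>D. \<Sum>j\<in>D. q i * a i * b i * q j) - (\<Sum>i\<in>D. \<Sum>j\<in>D. q i * a i * (q j * b j))
        - (\<Sum>i\<in>D. \<Sum>j\<in>D. q i * b i * (q j * a j)) + (\<Sum>i\<in>D. \<Sum>j\<in>D. q i * (q j * a j * b j))"
    by (simp add: algebra_simps sum.distrib sum_subtractf)
  also have "\<dots> = ?AB * sum q D - ?A * ?B - ?B * ?A + sum q D * ?AB"
    by (simp add: sum_product)
  also have "\<dots> = 2 * (?AB - ?A * ?B)"
    using assms by (simp add: algebra_simps)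
  finally show ?thesis
    using centered by simp
qed

definition omega_tap :: "(nat \<Rightarrow> real) \<Rightarrow> (nat \<Rightarrow> real) \<Rightarrow> nat \<Rightarrow> nat \<Rightarrow> real" where
  "omega_tap \<alpha> p t i = \<alpha> i * (kdelta (int t - int i) - p i)"

lemma omega_shift_eq_omega_tap: "i \<le> T \<Longrightarrow> omega \<alpha> p T t (n + int i) n = omega_tap \<alpha> p t i"
  by (simp add: omega_def omega_tap_def)

lemma omega_eq_0_outside_window:
  assumes "k \<notin> (\<lambda>i. n + int i) ` {0..T}"
  shows "omega \<alpha> p T t k n = 0"
proof -
  have "\<not> (n \<le> k \<and> k - n \<le> int T)"
  proof
    assume "n \<le> k \<and> k - n \<le> int T"
    then have "k = n + int (nat (k - n))" and "nat (k - n) \<in> {0..T}"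
      by auto
    with assms show False
      by blast
  qed
  then show ?thesis
    by (auto simp: omega_def)
qed

lemma sum_omega_tap:
  fixes e :: "nat \<Rightarrow> complex"
  assumes "t \<le> T"
  shows "(\<Sum>i\<in>{0..T}. of_real (omega_tap \<alpha> p t i) * e i)
    = of_real (\<alpha> t) * e t - (\<Sum>i\<in>{0..T}. of_real (p i) * (of_real (\<alpha> i) * e i))"
proof -
  have "(\<Sum>i\<in>{0..T}. of_real (omega_tap \<alpha> p t i) * e i)
      = (\<Sum>i\<in>{0..T}. (if i = t then of_real (\<alpha> i) * e i else 0) - of_real (p i) * (of_real (\<alpha> i) * e i))"
    by (rule sum.cong) (auto simp: omega_tap_def kdelta_def algebra_simps)
  also have "\<dots> = of_real (\<alpha> t) * e t - (\<Sum>i\<in>{0..T}. of_real (p i) * (of_real (\<alpha> i) * e i))"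
    using assms by (simp add: sum_subtractf)
  finally show ?thesis .
qed

lemma has_sum_z_transform_omega_autocorrelation:
  fixes z :: complex
  assumes "z \<noteq> 0"
  shows "((\<lambda>l. of_real (\<Sum>\<^sub>\<infinity>k. omega \<alpha> p T t k n * omega \<alpha> p T t (k + l) n) * z powi (- l)) has_sum
          (\<Sum>i\<in>{0..T}. of_real (omega_tap \<alpha> p t i) * z ^ i)
        * (\<Sum>j\<in>{0..T}. of_real (omega_tap \<alpha> p t j) * z powi (- int j))) UNIV"
proof -
  let ?S = "(\<lambda>i. n + int i) ` {0..T}" and ?x = "\<lambda>k. omega \<alpha> p T t k n"
  have "inj_on (\<lambda>i. n + int i) {0..T}"
    by (simp add: inj_on_def)
  then have "(\<Sum>k\<in>?S. \<Sum>j\<in>?S. of_real (?x k * ?x j) * z powi (k - j))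
      = (\<Sum>i\<in>{0..T}. \<Sum>j\<in>{0..T}.
           of_real (omega_tap \<alpha> p t i * omega_tap \<alpha> p t j) * z powi (int i - int j))"
    by (simp add: sum.reindex omega_shift_eq_omega_tap)
  also have "\<dots> = (\<Sum>i\<in>{0..T}. of_real (omega_tap \<alpha> p t i) * z ^ i)
                 * (\<Sum>j\<in>{0..T}. of_real (omega_tap \<alpha> p t j) * z powi (- int j))"
    using assms by (simp add: sum_product power_int_diff power_int_minus divide_inverse mult_ac)
  finally show ?thesis
    using has_sum_z_transform_autocorrelation[of ?S ?x z] omega_eq_0_outside_window by simp
qed

lemma esd_eq_sum_centered_products:
  fixes z :: complex
  assumes P: "set_pmf P \<subseteq> {0..T}" and "z \<noteq> 0"
  shows "esd \<alpha> P T n z = (\<Sum>t\<in>{0..T}. of_real (pmf P t) *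
      ((of_real (\<alpha> t) * z ^ t - (\<Sum>i\<in>{0..T}. of_real (pmf P i) * (of_real (\<alpha> i) * z ^ i)))
     * (of_real (\<alpha> t) * z powi (- int t)
         - (\<Sum>i\<in>{0..T}. of_real (pmf P i) * (of_real (\<alpha> i) * z powi (- int i))))))"
    (is "_ = ?centered")
proof -
  let ?r = "\<lambda>t l. \<Sum>\<^sub>\<infinity>k. omega \<alpha> (pmf P) T t k n * omega \<alpha> (pmf P) T t (k + l) n"
    and ?W = "\<lambda>t e. \<Sum>i\<in>{0..T}. of_real (omega_tap \<alpha> (pmf P) t i) * e i"
  have autocorr: "autocorr \<alpha> P T n l = (\<Sum>t\<in>{0..T}. ?r t l * pmf P t)" for l
    unfolding autocorr_def by (rule integral_measure_pmf_real) (use P in auto)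
  have "((\<lambda>l. \<Sum>t\<in>{0..T}. of_real (pmf P t) * (of_real (?r t l) * z powi (- l))) has_sum
         (\<Sum>t\<in>{0..T}. of_real (pmf P t) * (?W t (power z) * ?W t (\<lambda>j. z powi (- int j))))) UNIV"
    by (intro has_sum_sum has_sum_cmult_right has_sum_z_transform_omega_autocorrelation assms) simp
  then have "esd \<alpha> P T n z
      = (\<Sum>t\<in>{0..T}. of_real (pmf P t) * (?W t (power z) * ?W t (\<lambda>j. z powi (- int j))))"
    unfolding esd_def autocorr by (intro infsumI) (simp add: sum_distrib_left sum_distrib_right mult_ac)
  also have "\<dots> = ?centered"
    by (intro sum.cong refl) (simp add: sum_omega_tap)
  finally show ?thesis .
qed

theorem lemma3p2:
  fixes \<alpha> :: "nat \<Rightarrow> real" and P :: "nat pmf" and taubar :: nat and n :: int and z :: complex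
  assumes "taubar \<ge> 1"
    and "set_pmf P \<subseteq> {0..taubar}"
    and "z \<noteq> 0"
  shows "esd \<alpha> P taubar n z =
    (1/2) * (\<Sum>i1\<in>{0..taubar}. \<Sum>i2\<in>{0..taubar}.
       (complex_of_real (\<alpha> i1) * z ^ i1 - complex_of_real (\<alpha> i2) * z ^ i2)
     * (complex_of_real (\<alpha> i1) * z powi (- int i1) - complex_of_real (\<alpha> i2) * z powi (- int i2))
     * complex_of_real (pmf P i1) * complex_of_real (pmf P i2))"
proof -
  have "(\<Sum>i\<in>{0..taubar}. complex_of_real (pmf P i)) = 1"
    using sum_pmf_eq_1[OF _ assms(2)] by (metis finite_atLeastAtMost of_real_1 of_real_sum)
  then show ?thesis
    unfolding esd_eq_sum_centered_products[OF assms(2,3)]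
    by (rule sum_centered_products_eq_half_pairwise)
qed

end
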